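(* In the setting below, let $e,f\in G_0$ with $T_e\cap S_f\neq\emptyset$, and let $n_{e,f}=|T_e\cap S_f|=|\{g\in G: r(g)=e,\ d(g)=f\}|$. Then $$B_{e,f}=\bigoplus_{g\in G_e,\ l\in T_e\cap S_f}E_g\delta_g\#v_l\ \cong\ M_{n_{e,f}}(E_e)$$ as unital $K$-algebras, where $B_{e,f}$ has identity $1_e\delta_e\#\sum_{l\in T_e\cap S_f}v_l$.
   Context: Groupoid conventions. A groupoid is a small category with all morphisms invertible, regarded as the set $G$ of morphisms. For $g\in G$ we have $d(g)=g^{-1}g$ and $r(g)=gg^{-1}$. The product $gh$ is defined iff $d(g)=r(h)$, and then $d(gh)=d(h)$, $r(gh)=r(g)$. $G^2=\{(g,h):d(g)=r(h)\}$, and $G_0$ is the set of identities. For $e\in G_0$: - $G_e=\{g: d(g)=r(g)=e\}$; - $S_e=\{g\in G: d(g)=e\}$; - $T_e=\{g\in G: r(g)=e\}$. Actions. An action of $G$ on a ring $R$ is a pair $\beta=(\{E_g\},\{\beta_g\})$ where each $E_g=E_{r(g)}$ is an ideal of $R$, each $\beta_g:E_{g^{-1}}\to E_g$ is a ring isomorphism, $\beta_e=\mathrm{id}$ for $e\in G_0$, and $\beta_g\beta_h=\beta_{gh}$ on $E_{h^{-1}}$ for $(g,h)\in G^2$. Skew groupoid ring. $R\star_\beta G=\bigoplus_{g\in G}E_g\delta_g$ (the $\delta_g$ are formal symbols), with $(x\delta_g)(y\delta_h)=x\beta_g(y)\delta_{gh}$ if $(g,h)\in G^2$ and $0$ otherwise,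 for $x\in E_g$, $y\in E_h$. $KG^*$. The free $K$-module with basis $\{v_g\}_{g\in G}$, with $v_gv_h=\delta_{g,h}v_g$ and identity $\sum_g v_g$. Weak smash product. For a unital $G$-graded algebra $A=\bigoplus A_g$ (with $A_gA_h\subseteq A_{gh}$ if $(g,h)\in G^2$, and $0$ otherwise), $KG^*$ acts by $v_h\cdot a=a_h$ (the $h$-component). $A\#KG^*=A\otimes_K KG^*$ with $(a\#v_g)(b\#v_h)=a(v_{gh^{-1}}\cdot b)\#v_h$ if $d(g)=d(h)$, and $0$ otherwise. Setting. $K$ is a commutative unital ring and $G$ is a finite groupoid. $R$ is a not necessarily unital $K$-algebra with an action $\beta$ of $G$ (by $K$-linear maps) such that each $E_e$, $e\in G_0$, has an identity element $1_e$; put $1_g:=1_{r(g)}$, the identity of $E_g$. Then $R\star_\beta G$ is a unital $K$-algebra with identity $\sum_{e\in G_0}1_e\delta_e$. It is $G$-graded with $g$-component $E_g\delta_g$, so that $v_k\cdot(a_g\delta_g)=\delta_{k,g}a_g\delta_g$. Let $B=(R\star_\beta G)\#KG^*=\bigoplus_{g,h\in G}E_g\delta_g\#v_h$. $M_n(X)$ denotes the $n\times n$ matrix algebra over $X$. *)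

theory Defs
  imports Main "HOL.Modules"
begin

definition gdom :: "('g \<Rightarrow> 'g \<Rightarrow> 'g) \<Rightarrow> ('g \<Rightarrow> 'g) \<Rightarrow> 'g \<Rightarrow> 'g" where
  "gdom m i g = m (i g) g"

definition gran :: "('g \<Rightarrow> 'g \<Rightarrow> 'g) \<Rightarrow> ('g \<Rightarrow> 'g) \<Rightarrow> 'g \<Rightarrow> 'g" where
  "gran m i g = m g (i g)"

definition groupoid :: "'g set \<Rightarrow> ('g \<Rightarrow> 'g \<Rightarrow> 'g) \<Rightarrow> ('g \<Rightarrow> 'g) \<Rightarrow> bool" where
  "groupoid G m i \<longleftrightarrow>
     (\<forall>g\<in>G. i g \<in> G \<and> gdom m i (i g) = gran m i g \<and> gran m i (i g) = gdom m i g) \<and>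
     (\<forall>g\<in>G. \<forall>h\<in>G. gdom m i g = gran m i h \<longrightarrow>
        m g h \<in> G \<and> gdom m i (m g h) = gdom m i h \<and> gran m i (m g h) = gran m i g) \<and>
     (\<forall>g\<in>G. \<forall>h\<in>G. \<forall>k\<in>G. gdom m i g = gran m i h \<longrightarrow> gdom m i h = gran m i k \<longrightarrow>
        m (m g h) k = m g (m h k)) \<and>
     (\<forall>g\<in>G. m (gran m i g) g = g \<and> m g (gdom m i g) = g)"

definition gobjs :: "'g set \<Rightarrow> ('g \<Rightarrow> 'g \<Rightarrow> 'g) \<Rightarrow> ('g \<Rightarrow> 'g) \<Rightarrow> 'g set" where
  "gobjs G m i = {e \<in> G. gdom m i e = e}"

definition ring_ideal :: "'r::ring set \<Rightarrow> bool" where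
  "ring_ideal I \<longleftrightarrow> 0 \<in> I \<and> (\<forall>x\<in>I. \<forall>y\<in>I. x - y \<in> I) \<and> (\<forall>x\<in>I. \<forall>y. y * x \<in> I \<and> x * y \<in> I)"

text \<open>R (the type 'r, a not necessarily unital ring) is a K-algebra via sc.\<close>
definition kalgebra :: "('k::comm_ring_1 \<Rightarrow> 'r::ring \<Rightarrow> 'r) \<Rightarrow> bool" where
  "kalgebra sc \<longleftrightarrow> module sc \<and> (\<forall>c x y. sc c (x * y) = sc c x * y \<and> sc c (x * y) = x * sc c y)"

definition groupoid_action ::
  "'g set \<Rightarrow> ('g \<Rightarrow> 'g \<Rightarrow> 'g) \<Rightarrow> ('g \<Rightarrow> 'g) \<Rightarrow> ('k::comm_ring_1 \<Rightarrow> 'r::ring \<Rightarrow> 'r)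
     \<Rightarrow> ('g \<Rightarrow> 'r set) \<Rightarrow> ('g \<Rightarrow> 'r \<Rightarrow> 'r) \<Rightarrow> bool" where
  "groupoid_action G m i sc E \<beta> \<longleftrightarrow>
     (\<forall>g\<in>G. E g = E (gran m i g)) \<and>
     (\<forall>e\<in>gobjs G m i. ring_ideal (E e)) \<and>
     (\<forall>g\<in>G. bij_betw (\<beta> g) (E (i g)) (E g) \<and>
        (\<forall>x\<in>E (i g). \<forall>y\<in>E (i g). \<beta> g (x + y) = \<beta> g x + \<beta> g y \<and> \<beta> g (x * y) = \<beta> g x * \<beta> g y) \<and>
        (\<forall>c. \<forall>x\<in>E (i g). \<beta> g (sc c x) = sc c (\<beta> g x))) \<and>
     (\<forall>e\<in>gobjs G m i. \<forall>x\<in>E e. \<beta> e x = x) \<and>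
     (\<forall>g\<in>G. \<forall>h\<in>G. gdom m i g = gran m i h \<longrightarrow> (\<forall>x\<in>E (i h). \<beta> g (\<beta> h x) = \<beta> (m g h) x))"

text \<open>An element of R \<star>_\<beta> G = \<Oplus> E_g \<delta>_g is represented as a function a with a g \<in> E_g
  (the coefficient of \<delta>_g), zero outside G.\<close>
definition skew_mult ::
  "'g set \<Rightarrow> ('g \<Rightarrow> 'g \<Rightarrow> 'g) \<Rightarrow> ('g \<Rightarrow> 'g) \<Rightarrow> ('g \<Rightarrow> 'r::ring \<Rightarrow> 'r)
     \<Rightarrow> ('g \<Rightarrow> 'r) \<Rightarrow> ('g \<Rightarrow> 'r) \<Rightarrow> ('g \<Rightarrow> 'r)" where
  "skew_mult G m i \<beta> a b = (\<lambda>p. \<Sum>(k, l)\<in>{(k, l) \<in> G \<times> G. gdom m i k = gran m i l \<and> m k l = p}.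
        a k * \<beta> k (b l))"

text \<open>The action of v_k on the graded algebra: the k-component.\<close>
definition gcomp :: "'g \<Rightarrow> ('g \<Rightarrow> 'r::zero) \<Rightarrow> ('g \<Rightarrow> 'r)" where
  "gcomp k a = (\<lambda>g. if g = k then a g else 0)"

text \<open>An element \<Sum>_h x_h # v_h of (R \<star>_\<beta> G) # KG* is represented as x with x h the element x_h
  of the skew groupoid ring; so x h g is the coefficient of E_g \<delta>_g # v_h.\<close>
definition smash_mult ::
  "'g set \<Rightarrow> ('g \<Rightarrow> 'g \<Rightarrow> 'g) \<Rightarrow> ('g \<Rightarrow> 'g) \<Rightarrow> ('g \<Rightarrow> 'r::ring \<Rightarrow> 'r)
     \<Rightarrow> ('g \<Rightarrow> 'g \<Rightarrow> 'r) \<Rightarrow> ('g \<Rightarrow> 'g \<Rightarrow> 'r) \<Rightarrow> ('g \<Rightarrow> 'g \<Rightarrow> 'r)" where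
  "smash_mult G m i \<beta> x y = (\<lambda>h. if h \<in> G then
      (\<lambda>p. \<Sum>g\<in>{g \<in> G. gdom m i g = gdom m i h}.
             skew_mult G m i \<beta> (x g) (gcomp (m g (i h)) (y h)) p)
      else (\<lambda>_. 0))"

definition Bef :: "'g set \<Rightarrow> ('g \<Rightarrow> 'g \<Rightarrow> 'g) \<Rightarrow> ('g \<Rightarrow> 'g) \<Rightarrow> ('g \<Rightarrow> 'r::zero set) \<Rightarrow> 'g \<Rightarrow> 'g
     \<Rightarrow> ('g \<Rightarrow> 'g \<Rightarrow> 'r) set" where
  "Bef G m i E e f = {x. (\<forall>l g. x l g \<noteq> 0 \<longrightarrow>
        l \<in> G \<and> gran m i l = e \<and> gdom m i l = f \<and> g \<in> G \<and> gdom m i g = e \<and> gran m i g = e) \<and>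
      (\<forall>l\<in>G. \<forall>g\<in>G. x l g \<in> E g)}"

definition Bef_one :: "'g set \<Rightarrow> ('g \<Rightarrow> 'g \<Rightarrow> 'g) \<Rightarrow> ('g \<Rightarrow> 'g) \<Rightarrow> ('g \<Rightarrow> 'r::zero) \<Rightarrow> 'g \<Rightarrow> 'g
     \<Rightarrow> ('g \<Rightarrow> 'g \<Rightarrow> 'r)" where
  "Bef_one G m i u e f = (\<lambda>l g. if l \<in> G \<and> gran m i l = e \<and> gdom m i l = f \<and> g = e then u e else 0)"

definition mat_carrier :: "nat \<Rightarrow> 'r::zero set \<Rightarrow> (nat \<Rightarrow> nat \<Rightarrow> 'r) set" where
  "mat_carrier n I = {A. \<forall>p q. (p < n \<and> q < n \<longrightarrow> A p q \<in> I) \<and> (\<not> (p < n \<and> q < n) \<longrightarrow> A p q = 0)}"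

definition mat_mult :: "nat \<Rightarrow> (nat \<Rightarrow> nat \<Rightarrow> 'r::ring) \<Rightarrow> (nat \<Rightarrow> nat \<Rightarrow> 'r) \<Rightarrow> (nat \<Rightarrow> nat \<Rightarrow> 'r)" where
  "mat_mult n A C = (\<lambda>p q. if p < n \<and> q < n then (\<Sum>k<n. A p k * C k q) else 0)"

definition mat_one :: "nat \<Rightarrow> 'r::zero \<Rightarrow> (nat \<Rightarrow> nat \<Rightarrow> 'r)" where
  "mat_one n one = (\<lambda>p q. if p < n \<and> q < n \<and> p = q then one else 0)"

end

theory Submission
  imports Defs
begin

(* Write T = T_e \<inter> S_f (arrows f \<rightarrow> e), fix a base arrow l0 \<in> T and an enumeration
   a_0, ..., a_{n-1} of T.  A basis element E_g \<delta>_g # v_c of B_{e,f} has g \<in> G_e and c \<in> T,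
   so g = a_P a_Q^{-1} for the unique indices with a_Q = c and a_P = g c.  The isomorphism
   sends x to the matrix with (P,Q)-entry \<beta>_{l0 a_P^{-1}}(x_{a_Q}(a_P a_Q^{-1})); the twist by
   \<beta>_{l0 a_P^{-1}} transports every coefficient into a common copy of E_e in such a way that
   the smash product becomes the matrix product. *)

section \<open>Groupoid algebra\<close>

locale groupoid_struct =
  fixes G :: "'g set" and m :: "'g \<Rightarrow> 'g \<Rightarrow> 'g" and i :: "'g \<Rightarrow> 'g"
  assumes grp: "groupoid G m i"
begin

abbreviation "d \<equiv> gdom m i"
abbreviation "r \<equiv> gran m i"

lemma inv_closed[simp]: "g \<in> G \<Longrightarrow> i g \<in> G"
  and d_inv[simp]: "g \<in> G \<Longrightarrow> d (i g) = r g"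
  and r_inv[simp]: "g \<in> G \<Longrightarrow> r (i g) = d g"
  using grp unfolding groupoid_def by blast+

lemma mult_closed[simp]: "g \<in> G \<Longrightarrow> h \<in> G \<Longrightarrow> d g = r h \<Longrightarrow> m g h \<in> G"
  and d_mult[simp]: "g \<in> G \<Longrightarrow> h \<in> G \<Longrightarrow> d g = r h \<Longrightarrow> d (m g h) = d h"
  and r_mult[simp]: "g \<in> G \<Longrightarrow> h \<in> G \<Longrightarrow> d g = r h \<Longrightarrow> r (m g h) = r g"
  using grp unfolding groupoid_def by blast+

lemma assoc[simp]: "g \<in> G \<Longrightarrow> h \<in> G \<Longrightarrow> k \<in> G \<Longrightarrow> d g = r h \<Longrightarrow> d h = r k \<Longrightarrow>
   m (m g h) k = m g (m h k)"
  using grp unfolding groupoid_def by blast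

lemma lunit[simp]: "g \<in> G \<Longrightarrow> m (r g) g = g"
  and runit[simp]: "g \<in> G \<Longrightarrow> m g (d g) = g"
  using grp unfolding groupoid_def by blast+

lemma inv_mult_self[simp]: "m (i g) g = d g" by (simp add: gdom_def)
lemma mult_inv_self[simp]: "m g (i g) = r g" by (simp add: gran_def)

lemma d_closed[simp]: "g \<in> G \<Longrightarrow> d g \<in> G"
  by (metis inv_mult_self inv_closed mult_closed d_inv)
lemma r_closed[simp]: "g \<in> G \<Longrightarrow> r g \<in> G"
  by (metis mult_inv_self inv_closed mult_closed r_inv)
lemma d_d[simp]: "g \<in> G \<Longrightarrow> d (d g) = d g"
  by (metis inv_mult_self inv_closed d_mult d_inv)
lemma r_d[simp]: "g \<in> G \<Longrightarrow> r (d g) = d g"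
  by (metis inv_mult_self inv_closed r_mult d_inv r_inv)
lemma d_r[simp]: "g \<in> G \<Longrightarrow> d (r g) = r g"
  by (metis mult_inv_self inv_closed d_mult d_inv r_inv)

text \<open>Right unit law in the form needed once d h has been rewritten to another identity,
  and left cancellation g^{-1}(g h) = h.\<close>
lemma runit_eq[simp]: "h \<in> G \<Longrightarrow> d h = x \<Longrightarrow> m h x = h"
  by auto

lemma inv_mult_cancel_left[simp]: "g \<in> G \<Longrightarrow> h \<in> G \<Longrightarrow> d g = r h \<Longrightarrow> m (i g) (m g h) = h"
  by (subst assoc[symmetric]) auto

lemma right_cancel:
  assumes "k \<in> G" "k' \<in> G" "l \<in> G" "d k = r l" "d k' = r l" "m k l = m k' l"
  shows "k = k'"
proof -
  have "m (m k l) (i l) = k" "m (m k' l) (i l) = k'" using assms(1-5) by simp_all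
  then show ?thesis using assms(6) by metis
qed

lemma quot_mult_right: "a \<in> G \<Longrightarrow> c \<in> G \<Longrightarrow> d a = d c \<Longrightarrow> m (m a (i c)) c = a"
  by simp
lemma mult_quot_right: "a \<in> G \<Longrightarrow> g \<in> G \<Longrightarrow> d g = r a \<Longrightarrow> m (m g a) (i a) = g"
  by simp
lemma quot_mult_quot: "a \<in> G \<Longrightarrow> b \<in> G \<Longrightarrow> c \<in> G \<Longrightarrow> d a = d c \<Longrightarrow> d c = d b \<Longrightarrow>
    m (m a (i c)) (m c (i b)) = m a (i b)"
  by simp

lemma gobjs_iff: "e \<in> gobjs G m i \<longleftrightarrow> e \<in> G \<and> d e = e \<and> r e = e"
  unfolding gobjs_def by (metis (mono_tags, lifting) mem_Collect_eq r_d)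

lemma r_obj: "g \<in> G \<Longrightarrow> r g \<in> gobjs G m i"
  unfolding gobjs_def by simp

end

locale action_struct = groupoid_struct G m i
  for G :: "'g set" and m i +
  fixes sc :: "'k::comm_ring_1 \<Rightarrow> 'r::ring \<Rightarrow> 'r"
    and E :: "'g \<Rightarrow> 'r set" and \<beta> :: "'g \<Rightarrow> 'r \<Rightarrow> 'r"
  assumes kal: "kalgebra sc"
    and act: "groupoid_action G m i sc E \<beta>"
begin

lemma E_r: "g \<in> G \<Longrightarrow> E g = E (r g)"
  using act unfolding groupoid_action_def by blast

lemma E_i: "g \<in> G \<Longrightarrow> E (i g) = E (d g)"
  using E_r[of "i g"] by simp

lemma ideal_E: "g \<in> G \<Longrightarrow> ring_ideal (E g)"
proof -
  assume g: "g \<in> G"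
  have "\<forall>e\<in>gobjs G m i. ring_ideal (E e)" using act unfolding groupoid_action_def by blast
  then show ?thesis using r_obj[OF g] E_r[OF g] by simp
qed

lemma zero_E[simp]: "g \<in> G \<Longrightarrow> 0 \<in> E g"
  and diff_E: "g \<in> G \<Longrightarrow> x \<in> E g \<Longrightarrow> y \<in> E g \<Longrightarrow> x - y \<in> E g"
  and multl_E: "g \<in> G \<Longrightarrow> x \<in> E g \<Longrightarrow> x * y \<in> E g"
  using ideal_E unfolding ring_ideal_def by blast+

lemma add_E: "g \<in> G \<Longrightarrow> x \<in> E g \<Longrightarrow> y \<in> E g \<Longrightarrow> x + y \<in> E g"
  using diff_E[of g x "0 - y"] diff_E[of g 0 y] by simp

lemma sum_E: "g \<in> G \<Longrightarrow> (\<And>a. a \<in> A \<Longrightarrow> F a \<in> E g) \<Longrightarrow> sum F A \<in> E g"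
  by (induction A rule: infinite_finite_induct) (auto simp: add_E)

lemma beta_bij: "g \<in> G \<Longrightarrow> bij_betw (\<beta> g) (E (i g)) (E g)"
  using act unfolding groupoid_action_def by blast

lemma beta_mem: "g \<in> G \<Longrightarrow> x \<in> E (i g) \<Longrightarrow> \<beta> g x \<in> E g"
  using beta_bij bij_betwE by blast

lemma beta_add: "g \<in> G \<Longrightarrow> x \<in> E (i g) \<Longrightarrow> y \<in> E (i g) \<Longrightarrow> \<beta> g (x + y) = \<beta> g x + \<beta> g y"
  and beta_mult: "g \<in> G \<Longrightarrow> x \<in> E (i g) \<Longrightarrow> y \<in> E (i g) \<Longrightarrow> \<beta> g (x * y) = \<beta> g x * \<beta> g y"
  and beta_sc: "g \<in> G \<Longrightarrow> x \<in> E (i g) \<Longrightarrow> \<beta> g (sc c x) = sc c (\<beta> g x)"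
  using act unfolding groupoid_action_def by blast+

lemma beta_obj: "g \<in> gobjs G m i \<Longrightarrow> x \<in> E g \<Longrightarrow> \<beta> g x = x"
  and beta_comp: "g \<in> G \<Longrightarrow> h \<in> G \<Longrightarrow> d g = r h \<Longrightarrow> x \<in> E (i h) \<Longrightarrow> \<beta> g (\<beta> h x) = \<beta> (m g h) x"
  using act unfolding groupoid_action_def by blast+

lemma beta_zero[simp]: "g \<in> G \<Longrightarrow> \<beta> g 0 = 0"
  using beta_add[of g 0 0] by simp

lemma beta_sum: "g \<in> G \<Longrightarrow> (\<And>a. a \<in> A \<Longrightarrow> F a \<in> E (i g)) \<Longrightarrow> \<beta> g (sum F A) = (\<Sum>a\<in>A. \<beta> g (F a))"
proof (induction A rule: infinite_finite_induct)
  case (insert x A)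
  have "sum F A \<in> E (i g)" using insert by (intro sum_E) auto
  then show ?case using insert by (simp add: beta_add)
qed auto

lemma sc_zero[simp]: "sc c 0 = 0"
  using kal unfolding kalgebra_def by (simp add: module.scale_zero_right)

text \<open>A loop h at an object acts by a ring automorphism of E_{r h}, hence fixes its identity.\<close>
lemma beta_loop_unit:
  assumes h: "h \<in> G" "d h = r h"
    and one: "one \<in> E h" "\<And>x. x \<in> E h \<Longrightarrow> one * x = x \<and> x * one = x"
  shows "\<beta> h one = one"
proof -
  have Ei: "E (i h) = E h" using h(2) E_i[OF h(1)] E_r[OF h(1)] by simp
  then obtain y where y: "y \<in> E (i h)" "\<beta> h y = one"
    using beta_bij[OF h(1)] one(1) by (metis bij_betw_imp_surj_on imageE)
  have "\<beta> h one * one = \<beta> h (one * y)"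
    using y Ei one(1) beta_mult[OF h(1), of one y] by simp
  also have "\<dots> = one" using y Ei one(2)[of y] by simp
  finally have "\<beta> h one * one = one" .
  moreover have "\<beta> h one \<in> E h" using beta_mem[OF h(1)] Ei one(1) by simp
  ultimately show ?thesis using one(2) by simp
qed

end

section \<open>The block B_{e,f} and its closure under the smash product\<close>

locale block = action_struct G m i sc E \<beta>
  for G :: "'g set" and m i and sc :: "'k::comm_ring_1 \<Rightarrow> 'r::ring \<Rightarrow> 'r" and E \<beta> +
  fixes u :: "'g \<Rightarrow> 'r" and e f :: 'g
  assumes fin: "finite G"
    and unit_e: "u e \<in> E e" "\<And>x. x \<in> E e \<Longrightarrow> u e * x = x \<and> x * u e = x"
    and eobj: "e \<in> gobjs G m i" and fobj: "f \<in> gobjs G m i"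
begin

definition T :: "'g set" where "T = {g \<in> G. r g = e \<and> d g = f}"
definition loop :: "'g \<Rightarrow> bool" where "loop g \<longleftrightarrow> g \<in> G \<and> d g = e \<and> r g = e"

lemma e_props[simp]: "e \<in> G" "d e = e" "r e = e"
  and f_props[simp]: "f \<in> G" "d f = f" "r f = f"
  using eobj fobj gobjs_iff by auto

lemma T_mem: "a \<in> T \<longleftrightarrow> a \<in> G \<and> r a = e \<and> d a = f" by (simp add: T_def)

lemma T_fin: "finite T" using fin unfolding T_def by simp

lemma loop_E: "loop g \<Longrightarrow> E g = E e"
  and loop_Ei: "loop g \<Longrightarrow> E (i g) = E e"
  using E_r E_i unfolding loop_def by metis+

lemma T_quot_loop: "a \<in> T \<Longrightarrow> c \<in> T \<Longrightarrow> loop (m a (i c))"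
  unfolding loop_def T_mem by auto

lemma loop_mult_T: "loop g \<Longrightarrow> l \<in> T \<Longrightarrow> m g l \<in> T"
  unfolding loop_def T_mem by auto

lemma T_quot_self: "a \<in> T \<Longrightarrow> c \<in> T \<Longrightarrow> m (m a (i c)) (m c (i a)) = e"
  unfolding T_mem by auto

lemma beta_loop_comp: "loop g \<Longrightarrow> loop h \<Longrightarrow> x \<in> E e \<Longrightarrow> \<beta> g (\<beta> h x) = \<beta> (m g h) x"
  using beta_comp loop_Ei unfolding loop_def by metis

lemma beta_loop_mem: "loop g \<Longrightarrow> x \<in> E e \<Longrightarrow> \<beta> g x \<in> E e"
  using beta_mem loop_Ei loop_E unfolding loop_def by metis

lemma beta_e: "x \<in> E e \<Longrightarrow> \<beta> e x = x"
  using beta_obj eobj by blast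

lemma Bef_support: "x \<in> Bef G m i E e f \<Longrightarrow> x l g \<noteq> 0 \<Longrightarrow> l \<in> T \<and> loop g"
  unfolding Bef_def T_mem loop_def by blast

lemma Bef_E: "x \<in> Bef G m i E e f \<Longrightarrow> l \<in> G \<Longrightarrow> g \<in> G \<Longrightarrow> x l g \<in> E g"
  unfolding Bef_def by blast

lemma Bef_Ee: "x \<in> Bef G m i E e f \<Longrightarrow> loop g \<Longrightarrow> x l g \<in> E e"
  using Bef_support[of x l g] Bef_E[of x l g] loop_E[of g]
  by (cases "x l g = 0") (auto simp: T_mem loop_def)

definition factorisations :: "'g \<Rightarrow> ('g \<times> 'g) set" where
  "factorisations p = {(k, l) \<in> G \<times> G. d k = r l \<and> m k l = p}"

lemma factorisations_fin: "finite (factorisations p)"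
  unfolding factorisations_def by (rule finite_subset[of _ "G \<times> G"]) (auto simp: fin)

lemma smash_eq: "smash_mult G m i \<beta> x y h p = (if h \<in> G then
   (\<Sum>g\<in>{g \<in> G. d g = d h}. \<Sum>(k, l)\<in>factorisations p.
       x g k * \<beta> k (gcomp (m g (i h)) (y h) l)) else 0)"
  unfolding smash_mult_def skew_mult_def factorisations_def by simp

text \<open>Each coefficient of a smash product at an arrow p lies in E_p, since E_k = E_p whenever
  k l = p.\<close>
lemma smash_coeff_mem:
  assumes x: "x \<in> Bef G m i E e f" and p: "p \<in> G"
  shows "smash_mult G m i \<beta> x y h p \<in> E p"
proof -
  have "x g k * \<beta> k (gcomp (m g (i h)) (y h) l) \<in> E p"
    if "g \<in> G" "(k, l) \<in> factorisations p" for g k l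
  proof -
    have k: "k \<in> G" "l \<in> G" "d k = r l" "m k l = p" using that unfolding factorisations_def by auto
    then have "E k = E p" using E_r[OF k(1)] E_r[OF p] by auto
    then show ?thesis using multl_E[OF k(1) Bef_E[OF x \<open>g \<in> G\<close> k(1)]] by simp
  qed
  then show ?thesis unfolding smash_eq using p by (auto intro!: sum_E[OF p])
qed

lemma smash_support:
  assumes x: "x \<in> Bef G m i E e f" and y: "y \<in> Bef G m i E e f"
    and nz: "smash_mult G m i \<beta> x y h p \<noteq> 0"
  shows "h \<in> T \<and> loop p"
proof -
  have hG: "h \<in> G" using nz unfolding smash_eq by (auto split: if_splits)
  then obtain g where "g \<in> {g \<in> G. d g = d h}" and
    s: "(\<Sum>(k, l)\<in>factorisations p. x g k * \<beta> k (gcomp (m g (i h)) (y h) l)) \<noteq> 0"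
    using nz unfolding smash_eq by (auto elim: sum.not_neutral_contains_not_neutral)
  then obtain k l where kl: "(k, l) \<in> factorisations p"
    and t: "x g k * \<beta> k (gcomp (m g (i h)) (y h) l) \<noteq> 0"
    by (auto elim: sum.not_neutral_contains_not_neutral)
  have k: "k \<in> G" "l \<in> G" "d k = r l" "m k l = p" using kl unfolding factorisations_def by auto
  have "x g k \<noteq> 0" using t by auto
  then have "loop k" using Bef_support[OF x, of g k] by blast
  moreover have "y h l \<noteq> 0" using t k unfolding gcomp_def by (auto split: if_splits)
  then have "h \<in> T" "loop l" using Bef_support[OF y] by auto
  ultimately show ?thesis using k unfolding loop_def by auto
qed

lemma smash_closed: "x \<in> Bef G m i E e f \<Longrightarrow> y \<in> Bef G m i E e f \<Longrightarrow>
   smash_mult G m i \<beta> x y \<in> Bef G m i E e f"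
  using smash_coeff_mem smash_support unfolding Bef_def T_mem loop_def by blast

lemma one_mem: "Bef_one G m i u e f \<in> Bef G m i E e f"
  unfolding Bef_one_def Bef_def using unit_e by auto

end

section \<open>Matrix coordinates on B_{e,f}\<close>

locale block_coordinates = block G m i sc E \<beta> u e f
  for G :: "'g set" and m i and sc :: "'k::comm_ring_1 \<Rightarrow> 'r::ring \<Rightarrow> 'r" and E \<beta> u e f +
  fixes n :: nat and enum :: "nat \<Rightarrow> 'g" and l0 :: 'g
  assumes enum_bij: "bij_betw enum {..<n} T"
    and l0T: "l0 \<in> T"
begin

definition idx :: "'g \<Rightarrow> nat" where "idx = inv_into {..<n} enum"

lemma enum_T: "P < n \<Longrightarrow> enum P \<in> T"
  using enum_bij bij_betwE by blast
lemma idx_lt: "a \<in> T \<Longrightarrow> idx a < n"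
  unfolding idx_def using enum_bij by (metis bij_betw_def inv_into_into lessThan_iff)
lemma enum_idx: "a \<in> T \<Longrightarrow> enum (idx a) = a"
  unfolding idx_def using enum_bij by (metis bij_betw_def f_inv_into_f)
lemma idx_enum: "P < n \<Longrightarrow> idx (enum P) = P"
  unfolding idx_def using enum_bij by (metis bij_betw_def inv_into_f_f lessThan_iff)

text \<open>The twist h_a = l0 a^{-1} moves coefficients indexed by a \<in> T to the base arrow l0.\<close>
abbreviation twist :: "'g \<Rightarrow> 'g" where "twist a \<equiv> m l0 (i a)"

lemma twist_loop: "a \<in> T \<Longrightarrow> loop (twist a)"
  using T_quot_loop l0T by blast

definition phi :: "('g \<Rightarrow> 'g \<Rightarrow> 'r) \<Rightarrow> nat \<Rightarrow> nat \<Rightarrow> 'r" where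
  "phi x = (\<lambda>P Q. if P < n \<and> Q < n then
      \<beta> (twist (enum P)) (x (enum Q) (m (enum P) (i (enum Q)))) else 0)"

definition psi :: "(nat \<Rightarrow> nat \<Rightarrow> 'r) \<Rightarrow> 'g \<Rightarrow> 'g \<Rightarrow> 'r" where
  "psi A = (\<lambda>l g. if l \<in> T \<and> loop g then
      \<beta> (m (m g l) (i l0)) (A (idx (m g l)) (idx l)) else 0)"

lemma phi_mem: "x \<in> Bef G m i E e f \<Longrightarrow> phi x \<in> mat_carrier n (E e)"
  unfolding mat_carrier_def phi_def
  using beta_loop_mem twist_loop Bef_Ee T_quot_loop enum_T by auto

lemma psi_mem:
  assumes A: "A \<in> mat_carrier n (E e)"
  shows "psi A \<in> Bef G m i E e f"
proof -
  have "psi A l g \<in> E e" if "l \<in> T" "loop g" for l g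
  proof -
    have a: "m g l \<in> T" using loop_mult_T that by blast
    then have "A (idx (m g l)) (idx l) \<in> E e"
      using A idx_lt that unfolding mat_carrier_def by blast
    then show ?thesis using that beta_loop_mem T_quot_loop[OF a l0T] unfolding psi_def by simp
  qed
  then have "psi A l g \<in> E g" if "l \<in> G" "g \<in> G" for l g
    using that loop_E unfolding psi_def by (cases "l \<in> T \<and> loop g") auto
  moreover have "psi A l g \<noteq> 0 \<Longrightarrow> l \<in> T \<and> loop g" for l g
    unfolding psi_def by (auto split: if_splits)
  ultimately show ?thesis unfolding Bef_def T_mem loop_def by blast
qed

text \<open>Undoing a twist: \<beta>_{a l0^{-1}} \<beta>_{l0 a^{-1}} is \<beta>_e = id on E_e, and symmetrically.\<close>
lemma untwist: "a \<in> T \<Longrightarrow> z \<in> E e \<Longrightarrow> \<beta> (m a (i l0)) (\<beta> (twist a) z) = z"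
  and retwist: "a \<in> T \<Longrightarrow> z \<in> E e \<Longrightarrow> \<beta> (twist a) (\<beta> (m a (i l0)) z) = z"
  using beta_loop_comp T_quot_loop twist_loop T_quot_self beta_e l0T by metis+

lemma psi_phi:
  assumes x: "x \<in> Bef G m i E e f"
  shows "psi (phi x) = x"
proof (intro ext)
  fix l g
  show "psi (phi x) l g = x l g"
  proof (cases "l \<in> T \<and> loop g")
    case True
    then have a: "m g l \<in> T" using loop_mult_T by blast
    have "phi x (idx (m g l)) (idx l) = \<beta> (twist (m g l)) (x l g)"
      unfolding phi_def using idx_lt a True enum_idx mult_quot_right[of l g]
      unfolding T_mem loop_def by simp
    then show ?thesis unfolding psi_def using True untwist[OF a] Bef_Ee[OF x] by simp
  next
    case False
    then show ?thesis using Bef_support[OF x] unfolding psi_def by auto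
  qed
qed

lemma phi_psi:
  assumes A: "A \<in> mat_carrier n (E e)"
  shows "phi (psi A) = A"
proof (intro ext)
  fix P Q
  show "phi (psi A) P Q = A P Q"
  proof (cases "P < n \<and> Q < n")
    case True
    let ?a = "enum P" and ?c = "enum Q"
    have a: "?a \<in> T" and c: "?c \<in> T" using True enum_T by auto
    have "psi A ?c (m ?a (i ?c)) = \<beta> (m ?a (i l0)) (A P Q)"
      unfolding psi_def using T_quot_loop[OF a c] c quot_mult_right[of ?a ?c] idx_enum True a
      unfolding T_mem by simp
    then show ?thesis
      unfolding phi_def using True retwist[OF a] A unfolding mat_carrier_def by simp
  next
    case False
    then show ?thesis using A unfolding phi_def mat_carrier_def by auto
  qed
qed

lemma phi_bij: "bij_betw phi (Bef G m i E e f) (mat_carrier n (E e))"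
  by (rule bij_betw_byWitness[where f'=psi]) (auto simp: psi_phi phi_psi phi_mem psi_mem)

text \<open>Additivity and K-linearity of phi come from those of the twisting automorphisms,
  which are applicable because every entry lies in the domain E_e of the twist.\<close>
lemma entry_in_twist_domain:
  assumes "x \<in> Bef G m i E e f" "P < n" "Q < n"
  shows "twist (enum P) \<in> G" "x (enum Q) (m (enum P) (i (enum Q))) \<in> E (i (twist (enum P)))"
  using twist_loop[of "enum P"] Bef_Ee[OF assms(1) T_quot_loop] loop_Ei enum_T assms(2,3)
  unfolding loop_def by auto

lemma phi_add:
  assumes "x \<in> Bef G m i E e f" "y \<in> Bef G m i E e f"
  shows "phi (\<lambda>l g. x l g + y l g) = (\<lambda>P Q. phi x P Q + phi y P Q)"
  unfolding phi_def
  by (intro ext) (auto simp add: beta_add entry_in_twist_domain[OF assms(1)] entry_in_twist_domain[OF assms(2)])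

lemma phi_sc:
  assumes "x \<in> Bef G m i E e f"
  shows "phi (\<lambda>l g. sc c (x l g)) = (\<lambda>P Q. sc c (phi x P Q))"
  unfolding phi_def by (intro ext) (auto simp add: beta_sc entry_in_twist_domain[OF assms])

text \<open>The identity of B_{e,f} has coefficient 1_e exactly at the diagonal entries, since
  a c^{-1} = e iff a = c, and loops fix 1_e.\<close>
lemma phi_one: "phi (Bef_one G m i u e f) = mat_one n (u e)"
proof (intro ext)
  fix P Q
  show "phi (Bef_one G m i u e f) P Q = mat_one n (u e) P Q"
  proof (cases "P < n \<and> Q < n")
    case True
    let ?a = "enum P" and ?c = "enum Q"
    have a: "?a \<in> T" and c: "?c \<in> T" using True enum_T by auto
    have diag: "m ?a (i ?c) = e \<longleftrightarrow> P = Q"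
    proof
      assume "m ?a (i ?c) = e"
      then have "?a = m e ?c" using quot_mult_right[of ?a ?c] a c unfolding T_mem by simp
      then have "?a = ?c" using c unfolding T_mem by (metis lunit)
      then show "P = Q" using True idx_enum by metis
    qed (use a in \<open>simp add: T_mem\<close>)
    have h: "loop (twist ?a)" using twist_loop[OF a] .
    then have "\<beta> (twist ?a) (u e) = u e"
      using unit_e loop_E[OF h] unfolding loop_def by (intro beta_loop_unit) simp_all
    then show ?thesis unfolding phi_def mat_one_def Bef_one_def
      using True diag c h unfolding T_mem loop_def by auto
  qed (auto simp add: phi_def mat_one_def)
qed

text \<open>The coefficient of x y at (c, a c^{-1}): among all factorisations of a c^{-1} only
  k = a g^{-1}, l = g c^{-1} meets the supports, and the g-sum runs over T.\<close>
lemma smash_entry_inner: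
  assumes x: "x \<in> Bef G m i E e f" and a: "a \<in> T" and c: "c \<in> T"
    and g: "g \<in> G" "d g = d c"
  shows "(\<Sum>(k, l)\<in>factorisations (m a (i c)). x g k * \<beta> k (gcomp (m g (i c)) (y c) l)) =
     (if g \<in> T then x g (m a (i g)) * \<beta> (m a (i g)) (y c (m g (i c))) else 0)"
proof (cases "g \<in> T")
  case False
  then have "x g k = 0" for k using Bef_support[OF x, of g k] by blast
  then show ?thesis using False by (simp add: case_prod_beta)
next
  case True
  let ?k0 = "m a (i g)" and ?l1 = "m g (i c)"
  let ?F = "\<lambda>(k, l). x g k * \<beta> k (gcomp ?l1 (y c) l)"
  have mem: "(?k0, ?l1) \<in> factorisations (m a (i c))"
    unfolding factorisations_def using a c True unfolding T_mem by auto
  have rest: "?F (k, l) = 0" if "(k, l) \<in> factorisations (m a (i c)) - {(?k0, ?l1)}" for k l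
  proof (cases "l = ?l1")
    case True
    then have "k = ?k0"
      using that mem right_cancel[of k ?k0 l] unfolding factorisations_def by auto
    then show ?thesis using that True by simp
  qed (use that in \<open>simp add: gcomp_def factorisations_def\<close>)
  have "sum ?F (factorisations (m a (i c)) - {(?k0, ?l1)}) = 0"
    using rest by (intro sum.neutral) auto
  then have "sum ?F (factorisations (m a (i c))) = ?F (?k0, ?l1)"
    using sum.remove[OF factorisations_fin mem, of ?F] by simp
  then show ?thesis using True unfolding gcomp_def by simp
qed

lemma smash_entry:
  assumes x: "x \<in> Bef G m i E e f" and a: "a \<in> T" and c: "c \<in> T"
  shows "smash_mult G m i \<beta> x y c (m a (i c)) =
     (\<Sum>g\<in>T. x g (m a (i g)) * \<beta> (m a (i g)) (y c (m g (i c))))"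
proof -
  have cG: "c \<in> G" "d c = f" using c unfolding T_mem by auto
  have "smash_mult G m i \<beta> x y c (m a (i c)) = (\<Sum>g\<in>{g \<in> G. d g = f}.
      if g \<in> T then x g (m a (i g)) * \<beta> (m a (i g)) (y c (m g (i c))) else 0)"
    unfolding smash_eq using cG smash_entry_inner[OF x a c] by (auto intro!: sum.cong)
  also have "\<dots> = (\<Sum>g\<in>{g \<in> G. d g = f} \<inter> T. x g (m a (i g)) * \<beta> (m a (i g)) (y c (m g (i c))))"
    using fin by (simp add: sum.inter_restrict)
  also have "{g \<in> G. d g = f} \<inter> T = T" unfolding T_def by auto
  finally show ?thesis .
qed

text \<open>Twisting one summand of the entry formula by l0 a^{-1} splits it into the product of a
  twisted x-entry and a twisted y-entry; the two twists compose to l0 g^{-1}.\<close>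
lemma twist_summand:
  assumes x: "x \<in> Bef G m i E e f" and y: "y \<in> Bef G m i E e f"
    and a: "a \<in> T" and c: "c \<in> T" and g: "g \<in> T"
  shows "\<beta> (twist a) (x g (m a (i g)) * \<beta> (m a (i g)) (y c (m g (i c)))) =
      \<beta> (twist a) (x g (m a (i g))) * \<beta> (twist g) (y c (m g (i c)))"
proof -
  have h: "loop (twist a)" and g1: "loop (m a (i g))" and g2: "loop (m g (i c))"
    using twist_loop[OF a] T_quot_loop a c g by auto
  have X: "x g (m a (i g)) \<in> E e" and Y: "y c (m g (i c)) \<in> E e"
    using Bef_Ee[OF x g1] Bef_Ee[OF y g2] .
  have "\<beta> (twist a) (\<beta> (m a (i g)) (y c (m g (i c)))) = \<beta> (twist g) (y c (m g (i c)))"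
    using beta_loop_comp[OF h g1 Y] quot_mult_quot[of l0 g a] l0T a g unfolding T_mem by simp
  then show ?thesis
    using beta_mult[of "twist a"] h X beta_loop_mem[OF g1 Y] loop_Ei[OF h]
    unfolding loop_def by simp
qed

text \<open>phi turns the smash product into the matrix product: twist the entry formula, split
  each summand, and reindex the sum over T by the enumeration.\<close>
lemma phi_mult:
  assumes x: "x \<in> Bef G m i E e f" and y: "y \<in> Bef G m i E e f"
  shows "phi (smash_mult G m i \<beta> x y) = mat_mult n (phi x) (phi y)"
proof (intro ext)
  fix P Q
  show "phi (smash_mult G m i \<beta> x y) P Q = mat_mult n (phi x) (phi y) P Q"
  proof (cases "P < n \<and> Q < n")
    case True
    let ?a = "enum P" and ?c = "enum Q"
    have a: "?a \<in> T" and c: "?c \<in> T" using True enum_T by auto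
    let ?F = "\<lambda>g. x g (m ?a (i g)) * \<beta> (m ?a (i g)) (y ?c (m g (i ?c)))"
    have FE: "?F g \<in> E (i (twist ?a))" if "g \<in> T" for g
      using Bef_Ee[OF x T_quot_loop[OF a that]] multl_E[of e] loop_Ei[OF twist_loop[OF a]] by simp
    have "phi (smash_mult G m i \<beta> x y) P Q = \<beta> (twist ?a) (sum ?F T)"
      unfolding phi_def using True smash_entry[OF x a c] by simp
    also have "\<dots> = (\<Sum>g\<in>T. \<beta> (twist ?a) (?F g))"
      using beta_sum[of "twist ?a" T ?F] twist_loop[OF a] FE unfolding loop_def by blast
    also have "\<dots> = (\<Sum>g\<in>T. \<beta> (twist ?a) (x g (m ?a (i g))) * \<beta> (twist g) (y ?c (m g (i ?c))))"
      using twist_summand[OF x y a c] by simp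
    also have "\<dots> = (\<Sum>K<n. phi x P K * phi y K Q)"
      using True by (subst sum.reindex_bij_betw[OF enum_bij, symmetric]) (auto simp: phi_def)
    finally show ?thesis unfolding mat_mult_def using True by simp
  qed (auto simp: phi_def mat_mult_def)
qed

end

theorem proposition3p6:
  fixes G :: "'g set" and m :: "'g \<Rightarrow> 'g \<Rightarrow> 'g" and i :: "'g \<Rightarrow> 'g"
    and sc :: "'k::comm_ring_1 \<Rightarrow> 'r::ring \<Rightarrow> 'r"
    and E :: "'g \<Rightarrow> 'r set" and \<beta> :: "'g \<Rightarrow> 'r \<Rightarrow> 'r" and u :: "'g \<Rightarrow> 'r"
    and e f :: 'g
  assumes "finite G" and "groupoid G m i"
    and "kalgebra sc"
    and "groupoid_action G m i sc E \<beta>"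
    and "\<forall>e'\<in>gobjs G m i. u e' \<in> E e' \<and> (\<forall>x\<in>E e'. u e' * x = x \<and> x * u e' = x)"
    and "e \<in> gobjs G m i" and "f \<in> gobjs G m i"
    and "{g \<in> G. gran m i g = e \<and> gdom m i g = f} \<noteq> {}"
  shows "\<exists>\<phi>. bij_betw \<phi> (Bef G m i E e f)
                (mat_carrier (card {g \<in> G. gran m i g = e \<and> gdom m i g = f}) (E e)) \<and>
           (\<forall>x\<in>Bef G m i E e f. \<forall>y\<in>Bef G m i E e f.
              smash_mult G m i \<beta> x y \<in> Bef G m i E e f \<and>
              \<phi> (\<lambda>l g. x l g + y l g) = (\<lambda>p q. \<phi> x p q + \<phi> y p q) \<and>
              \<phi> (smash_mult G m i \<beta> x y) =
                mat_mult (card {g \<in> G. gran m i g = e \<and> gdom m i g = f}) (\<phi> x) (\<phi> y)) \<and>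
           (\<forall>c. \<forall>x\<in>Bef G m i E e f. \<phi> (\<lambda>l g. sc c (x l g)) = (\<lambda>p q. sc c (\<phi> x p q))) \<and>
           Bef_one G m i u e f \<in> Bef G m i E e f \<and>
           \<phi> (Bef_one G m i u e f) = mat_one (card {g \<in> G. gran m i g = e \<and> gdom m i g = f}) (u e)"
proof -
  interpret block G m i sc E \<beta> u e f
    using assms by unfold_locales auto
  let ?n = "card {g \<in> G. gran m i g = e \<and> gdom m i g = f}"
  have T_eq: "{g \<in> G. gran m i g = e \<and> gdom m i g = f} = T" by (simp add: T_def)
  obtain enum where "bij_betw enum {..<?n} T"
    using ex_bij_betw_nat_finite[OF T_fin] T_eq by (auto simp: atLeast0LessThan)
  moreover obtain l0 where "l0 \<in> T" using assms(8) T_eq by blast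
  ultimately interpret block_coordinates G m i sc E \<beta> u e f ?n enum l0
    by unfold_locales
  show ?thesis
    using phi_bij phi_add phi_sc phi_mult smash_closed one_mem phi_one by blast
qed

end
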